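(* Let $\nu$ be a probability distribution on $[0,1]$ admitting a density bounded by some constant $M>0$, let $V\sim\nu$, and let $V_1,V_2,\dots$ be i.i.d. with law $\nu$. Then for every $t\in\mathbb N$ and every $p\in[0,1]$, \[0\le \mathbb E\big[\mathrm{GFT}_t(\mathbb E[V])\big]-\mathbb E\big[\mathrm{GFT}_t(p)\big]\le M\,\big|\mathbb E[V]-p\big|^2,\] and in particular $\max_{p\in[0,1]}\mathbb E[\mathrm{GFT}_t(p)]=\mathbb E[\mathrm{GFT}_t(\mathbb E[V])]$.
   Context: For $p,v_1,v_2\in[0,1]$, $\mathrm{gft}(p,v_1,v_2):=(v_1\vee v_2-v_1\wedge v_2)\,\mathbb I\{v_1\wedge v_2\le p\le v_1\vee v_2\}$ (with $\vee,\wedge$ denoting max and min), and $\mathrm{GFT}_t(q):=\mathrm{gft}(q,V_{2t-1},V_{2t})$. "Density bounded by $M$" means absolutely continuous w.r.t. Lebesgue measure with a density $f\le M$. *)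

theory Defs
  imports "HOL-Probability.Probability"
begin

definition gft :: "real \<Rightarrow> real \<Rightarrow> real \<Rightarrow> real" where
  "gft p v1 v2 = (if min v1 v2 \<le> p \<and> p \<le> max v1 v2 then max v1 v2 - min v1 v2 else 0)"

text \<open>GFT_t(q) = gft(q, V_{2t-1}, V_{2t}) for a sequence V indexed by positive naturals.\<close>
definition GFT :: "(nat \<Rightarrow> 'a \<Rightarrow> real) \<Rightarrow> nat \<Rightarrow> real \<Rightarrow> 'a \<Rightarrow> real" where
  "GFT V t q = (\<lambda>\<omega>. gft q (V (2*t - 1) \<omega>) (V (2*t) \<omega>))"

end

theory Submission
  imports Defs
begin

text \<open>Let \<open>X, Y\<close> be independent with law \<open>\<nu>\<close>, \<open>F(q) = P(X \<le> q)\<close> and \<open>m = E X\<close>. Splitting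
  \<open>gft q X Y\<close> according to which valuation lies below \<open>q\<close>, independence gives
  \<open>E gft(q, X, Y) = 2 (F(q) E(X - q)\<^sup>+ + E(q - X)\<^sup>+ P(X \<ge> q))\<close>, and as \<open>\<nu>\<close> has no atoms this is
  \<open>2 (E(X - q)\<^sup>+ - (m - q) P(X \<ge> q))\<close>. Hence the gain of posting \<open>m\<close> instead of \<open>p\<close> is \<open>2 E \<psi>(X)\<close>,
  where \<open>\<psi>(x)\<close> is the Bregman divergence of the convex map \<open>q \<mapsto> (x - q)\<^sup>+\<close> between \<open>m\<close> and \<open>p\<close>.
  So \<open>\<psi> \<ge> 0\<close>, which makes \<open>m\<close> optimal, and \<open>\<psi>(x) \<le> |x - m|\<close> between \<open>m\<close> and \<open>p\<close> while
  \<open>\<psi>\<close> vanishes elsewhere, so a density bounded by \<open>M\<close> gives \<open>2 E \<psi>(X) \<le> M (m - p)\<^sup>2\<close>.\<close>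

lemma gft_eq_sum_products:
  "gft q x y = indicator {..q} x * max (y - q) 0 + max (q - x) 0 * indicator {q..} y
             + max (x - q) 0 * indicator {..q} y + indicator {q..} x * max (q - y) 0"
  unfolding gft_def by (auto simp: indicator_def min_def max_def)

definition expected_gft :: "real measure \<Rightarrow> real \<Rightarrow> real" where
  "expected_gft nu q = 2 * (measure nu {..q} * (\<integral>x. max (x - q) 0 \<partial>nu)
                            + (\<integral>x. max (q - x) 0 \<partial>nu) * measure nu {q..})"

text \<open>The Bregman divergence between \<open>m\<close> and \<open>p\<close> of the convex map \<open>q \<mapsto> max (x - q) 0\<close>,
  whose subgradient at \<open>p\<close> is \<open>-indicator {p..} x\<close>.\<close>
definition hinge_gap :: "real \<Rightarrow> real \<Rightarrow> real \<Rightarrow> real" where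
  "hinge_gap m p x = max (x - m) 0 - max (x - p) 0 + (m - p) * indicator {p..} x"

lemma hinge_gap_nonneg: "0 \<le> hinge_gap m p x"
  by (auto simp: hinge_gap_def indicator_def)

lemma hinge_gap_le: "hinge_gap m p x \<le> \<bar>x - m\<bar> * indicator {min m p..max m p} x"
  by (auto simp: hinge_gap_def indicator_def)

lemma integral_abs_dist_between:
  fixes m p :: real
  shows "(\<integral>x. \<bar>x - m\<bar> * indicator {min m p..max m p} x \<partial>lborel) = (m - p)\<^sup>2 / 2"
proof (cases "p \<le> m")
  case True
  have "(\<integral>x. \<bar>x - m\<bar> * indicator {p..m} x \<partial>lborel) = (- (m - m)\<^sup>2 / 2) - (- (m - p)\<^sup>2 / 2)"
    by (rule integral_FTC_Icc_real[of p m "\<lambda>x. - (m - x)\<^sup>2 / 2"])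
       (use True in \<open>auto intro!: derivative_eq_intros continuous_intros simp: field_simps\<close>)
  with True show ?thesis by simp
next
  case False
  have "(\<integral>x. \<bar>x - m\<bar> * indicator {m..p} x \<partial>lborel) = (p - m)\<^sup>2 / 2 - (m - m)\<^sup>2 / 2"
    by (rule integral_FTC_Icc_real[of m p "\<lambda>x. (x - m)\<^sup>2 / 2"])
       (use False in \<open>auto intro!: derivative_eq_intros continuous_intros simp: field_simps\<close>)
  with False show ?thesis by (simp add: power2_commute)
qed

lemma integral_density_le_bound:
  fixes f g h :: "'a \<Rightarrow> real"
  assumes [measurable]: "f \<in> borel_measurable M" and "\<And>x. 0 \<le> f x" "\<And>x. f x \<le> B"
    and [measurable]: "g \<in> borel_measurable M" and "\<And>x. 0 \<le> g x" "\<And>x. g x \<le> h x"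
    and "integrable M h"
  shows "(\<integral>x. g x \<partial>density M (\<lambda>x. ennreal (f x))) \<le> B * (\<integral>x. h x \<partial>M)"
proof -
  have "(\<integral>x. g x \<partial>density M (\<lambda>x. ennreal (f x))) = (\<integral>x. f x * g x \<partial>M)"
    using assms by (subst integral_density) auto
  also have "\<dots> \<le> (\<integral>x. B * h x \<partial>M)"
  proof (rule integral_mono')
    fix x
    show "f x * g x \<le> B * h x"
      using assms by (meson mult_mono order.trans)
    show "0 \<le> B * h x"
      using assms by (meson mult_nonneg_nonneg order.trans)
  qed (use assms in auto)
  finally show ?thesis by simp
qed

lemma emeasure_density_lborel_singleton:
  assumes "f \<in> borel_measurable lborel"
  shows "emeasure (density lborel f) {q :: real} = 0"
proof -
  have "AE x in lborel. x \<in> {q} \<longrightarrow> f x = 0"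
    using AE_lborel_singleton[of q] by eventually_elim auto
  then have "{q} \<in> null_sets (density lborel f)"
    using assms by (simp add: null_sets_density_iff)
  then show ?thesis by auto
qed

context real_distribution
begin

lemma expected_gft_eq:
  assumes "integrable M (\<lambda>x. x)" and "emeasure M {q} = 0"
  shows "expected_gft M q
           = 2 * (expectation (\<lambda>x. max (x - q) 0) - (expectation (\<lambda>x. x) - q) * prob {q..})"
proof -
  have "prob {..q} = 1 - prob {q<..}"
    using prob_compl[of "{q<..}"] by (simp add: Compl_eq_Diff_UNIV[symmetric])
  also have "prob {q<..} = prob {q..}"
  proof -
    have "{q..} = {q} \<union> {q<..}" by auto
    then show ?thesis
      using finite_measure_Union[of "{q}" "{q<..}"] \<open>emeasure M {q} = 0\<close>
      by (simp add: measure_def)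
  qed
  finally have lower: "prob {..q} = 1 - prob {q..}" .
  have "expectation (\<lambda>x. max (x - q) 0 - max (q - x) 0) = expectation (\<lambda>x. x - q)"
    by (rule Bochner_Integration.integral_cong) auto
  then have upper: "expectation (\<lambda>x. max (q - x) 0)
                      = expectation (\<lambda>x. max (x - q) 0) - (expectation (\<lambda>x. x) - q)"
    using \<open>integrable M (\<lambda>x. x)\<close> prob_space by simp
  show ?thesis
    unfolding expected_gft_def lower upper by (simp add: algebra_simps)
qed

lemma expected_gft_mean_diff:
  assumes "integrable M (\<lambda>x. x)" and "\<And>q. emeasure M {q} = 0"
  shows "expected_gft M (expectation (\<lambda>x. x)) - expected_gft M p
           = 2 * expectation (hinge_gap (expectation (\<lambda>x. x)) p)"
proof -
  define m where "m = expectation (\<lambda>x. x)"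
  have "expectation (hinge_gap m p)
          = expectation (\<lambda>x. max (x - m) 0) - expectation (\<lambda>x. max (x - p) 0) + (m - p) * prob {p..}"
    unfolding hinge_gap_def using assms(1)
    by (subst Bochner_Integration.integral_add) (auto simp: emeasure_eq_measure)
  then show ?thesis
    using assms by (simp add: expected_gft_eq m_def algebra_simps)
qed

lemma expected_gft_le_mean:
  assumes "integrable M (\<lambda>x. x)" and "\<And>q. emeasure M {q} = 0"
  shows "expected_gft M p \<le> expected_gft M (expectation (\<lambda>x. x))"
proof -
  have "0 \<le> expectation (hinge_gap (expectation (\<lambda>x. x)) p)"
    by (simp add: integral_nonneg hinge_gap_nonneg)
  then show ?thesis
    using expected_gft_mean_diff[OF assms, of p] by simp
qed

lemma expected_gft_mean_gap_le:
  assumes M_density: "M = density lborel (\<lambda>x. ennreal (f x))"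
    and "f \<in> borel_measurable lborel" and "\<And>x. 0 \<le> f x" and "\<And>x. f x \<le> B"
    and "integrable M (\<lambda>x. x)"
  shows "expected_gft M (expectation (\<lambda>x. x)) - expected_gft M p
           \<le> B * (expectation (\<lambda>x. x) - p)\<^sup>2"
proof -
  define m where "m = expectation (\<lambda>x. x)"
  have atomless: "emeasure M {q} = 0" for q
    unfolding M_density using assms(2) by (intro emeasure_density_lborel_singleton) simp
  have "expected_gft M m - expected_gft M p = 2 * expectation (hinge_gap m p)"
    unfolding m_def by (rule expected_gft_mean_diff[OF assms(5) atomless])
  also have "expectation (hinge_gap m p)
               \<le> B * (\<integral>x. \<bar>x - m\<bar> * indicator {min m p..max m p} x \<partial>lborel)"
    unfolding M_density
  proof (rule integral_density_le_bound)
    show "hinge_gap m p \<in> borel_measurable lborel"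
      unfolding hinge_gap_def by measurable
    show "integrable lborel (\<lambda>x. \<bar>x - m\<bar> * indicator {min m p..max m p} x)"
      by (intro borel_integrable_atLeastAtMost continuous_intros)
  qed (use assms(2-4) in \<open>auto simp: hinge_gap_nonneg hinge_gap_le\<close>)
  finally show ?thesis
    unfolding m_def integral_abs_dist_between by simp
qed

lemma
  assumes "emeasure M {0..1} = 1"
  shows integrable_ident_if_unit_interval: "integrable M (\<lambda>x. x)"
    and mean_in_unit_interval: "expectation (\<lambda>x. x) \<in> {0..1}"
proof -
  have unit: "AE x in M. x \<in> {0..1}"
    using assms prob_eq_1[of "{0..1}"] by (simp add: emeasure_eq_measure)
  show integrable: "integrable M (\<lambda>x. x)"
    by (rule integrable_const_bound[of _ 1]) (use unit in \<open>auto elim: AE_mp\<close>)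
  have "0 \<le> expectation (\<lambda>x. x)"
    using unit by (intro integral_nonneg_AE) (auto elim: AE_mp)
  moreover have "expectation (\<lambda>x. x) \<le> expectation (\<lambda>x. 1)"
    using unit integrable by (intro integral_mono_AE) (auto elim: AE_mp)
  ultimately show "expectation (\<lambda>x. x) \<in> {0..1}"
    using prob_space by simp
qed

end

context prob_space
begin

lemma indep_vars_imp_indep_var:
  assumes "indep_vars M' X I" and "i \<in> I" and "j \<in> I" and "i \<noteq> j"
  shows "indep_var (M' i) (X i) (M' j) (X j)"
proof -
  have "indep_var (PiM {i} M') (\<lambda>\<omega>. restrict (\<lambda>i. X i \<omega>) {i})
                  (PiM {j} M') (\<lambda>\<omega>. restrict (\<lambda>i. X i \<omega>) {j})"
    using assms by (intro indep_var_restrict) auto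
  then have "indep_var (M' i) ((\<lambda>x. x i) \<circ> (\<lambda>\<omega>. restrict (\<lambda>i. X i \<omega>) {i}))
                       (M' j) ((\<lambda>x. x j) \<circ> (\<lambda>\<omega>. restrict (\<lambda>i. X i \<omega>) {j}))"
    by (rule indep_var_compose) (auto intro: measurable_component_singleton)
  then show ?thesis
    by (simp add: comp_def)
qed

lemma
  fixes g :: "'b \<Rightarrow> real" and h :: "'b \<Rightarrow> real"
  assumes "indep_var S X T Y"
    and [measurable]: "random_variable S X" "random_variable T Y"
      "g \<in> borel_measurable S" "h \<in> borel_measurable T"
    and "integrable (distr M S X) g" and "integrable (distr M T Y) h"
  shows integrable_indep_var_mult: "integrable M (\<lambda>\<omega>. g (X \<omega>) * h (Y \<omega>))"
    and integral_indep_var_mult: "expectation (\<lambda>\<omega>. g (X \<omega>) * h (Y \<omega>))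
           = (\<integral>x. g x \<partial>distr M S X) * (\<integral>y. h y \<partial>distr M T Y)"
proof -
  have indep: "indep_var borel (\<lambda>\<omega>. g (X \<omega>)) borel (\<lambda>\<omega>. h (Y \<omega>))"
    using indep_var_compose[OF assms(1), of g borel h borel] by (simp add: comp_def)
  have "integrable M (\<lambda>\<omega>. g (X \<omega>))" "integrable M (\<lambda>\<omega>. h (Y \<omega>))"
    using assms(6,7) by (simp_all add: integrable_distr_eq)
  then show "integrable M (\<lambda>\<omega>. g (X \<omega>) * h (Y \<omega>))"
    and "expectation (\<lambda>\<omega>. g (X \<omega>) * h (Y \<omega>))
           = (\<integral>x. g x \<partial>distr M S X) * (\<integral>y. h y \<partial>distr M T Y)"
    using indep_var_integrable[OF indep] indep_var_lebesgue_integral[OF indep]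
    by (simp_all add: integral_distr)
qed

lemma expectation_gft_indep:
  assumes "indep_var borel X borel Y" and [measurable]: "random_variable borel X" "random_variable borel Y"
    and distr_X: "distr M borel X = nu" and distr_Y: "distr M borel Y = nu"
    and "integrable nu (\<lambda>x. x)"
  shows "expectation (\<lambda>\<omega>. gft q (X \<omega>) (Y \<omega>)) = expected_gft nu q"
proof -
  interpret nu: real_distribution nu
    using distr_Y by auto
  define le_q ge_q excess shortfall :: "real \<Rightarrow> real"
    where "le_q = indicator {..q}" and "ge_q = indicator {q..}"
      and "excess = (\<lambda>x. max (x - q) 0)" and "shortfall = (\<lambda>x. max (q - x) 0)"
  have parts_measurable: "le_q \<in> borel_measurable borel" "ge_q \<in> borel_measurable borel"
    "excess \<in> borel_measurable borel" "shortfall \<in> borel_measurable borel"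
    unfolding le_q_def ge_q_def excess_def shortfall_def by simp_all
  have parts_integrable: "integrable nu le_q" "integrable nu ge_q"
    "integrable nu excess" "integrable nu shortfall"
    unfolding le_q_def ge_q_def excess_def shortfall_def
    using \<open>integrable nu (\<lambda>x. x)\<close> by (auto simp: integrable_indicator_iff nu.emeasure_eq_measure)
  have product_integrable: "integrable M (\<lambda>\<omega>. g (X \<omega>) * h (Y \<omega>))"
    and product_integral: "expectation (\<lambda>\<omega>. g (X \<omega>) * h (Y \<omega>)) = integral\<^sup>L nu g * integral\<^sup>L nu h"
    if "g \<in> borel_measurable borel" "h \<in> borel_measurable borel" "integrable nu g" "integrable nu h"
    for g h :: "real \<Rightarrow> real"
    using integrable_indep_var_mult[OF assms(1) _ _ that(1,2)] integral_indep_var_mult[OF assms(1) _ _ that(1,2)]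
      that(3,4) by (simp_all add: distr_X distr_Y)
  have "(\<lambda>\<omega>. gft q (X \<omega>) (Y \<omega>))
          = (\<lambda>\<omega>. le_q (X \<omega>) * excess (Y \<omega>) + shortfall (X \<omega>) * ge_q (Y \<omega>)
                + excess (X \<omega>) * le_q (Y \<omega>) + ge_q (X \<omega>) * shortfall (Y \<omega>))"
    unfolding le_q_def ge_q_def excess_def shortfall_def by (simp add: gft_eq_sum_products)
  then show ?thesis
    unfolding expected_gft_def
    by (simp add: Bochner_Integration.integral_add Bochner_Integration.integrable_add
        product_integrable product_integral parts_measurable parts_integrable)
       (simp add: le_q_def ge_q_def excess_def shortfall_def algebra_simps)
qed

lemma expectation_GFT:
  assumes "indep_vars (\<lambda>_. borel) Vs {1..}" and "\<And>i. random_variable borel (Vs i)"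
    and "\<And>i. i \<ge> 1 \<Longrightarrow> distr M borel (Vs i) = nu"
    and "integrable nu (\<lambda>x. x)" and "t \<ge> 1"
  shows "expectation (GFT Vs t q) = expected_gft nu q"
  unfolding GFT_def
proof (rule expectation_gft_indep)
  show "indep_var borel (Vs (2 * t - 1)) borel (Vs (2 * t))"
    using assms(1,5) by (intro indep_vars_imp_indep_var[where M' = "\<lambda>_. borel"]) auto
next
  show "random_variable borel (Vs (2 * t - 1))" "random_variable borel (Vs (2 * t))"
    using assms(2) by auto
  show "distr M borel (Vs (2 * t - 1)) = nu" "distr M borel (Vs (2 * t)) = nu"
    using assms(3,5) by auto
qed (rule assms(4))

end

theorem theorem2p3:
  fixes M :: "'a measure" and nu :: "real measure" and f :: "real \<Rightarrow> real"
    and Mb :: real and V :: "'a \<Rightarrow> real" and Vs :: "nat \<Rightarrow> 'a \<Rightarrow> real"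
    and t :: nat and p :: real
  assumes "prob_space M"
    and "Mb > 0"
    and "f \<in> borel_measurable lborel" and "\<And>x. 0 \<le> f x" and "\<And>x. f x \<le> Mb"
    and "nu = density lborel (\<lambda>x. ennreal (f x))"
    and "emeasure nu {0..1} = 1"
    and "V \<in> borel_measurable M" and "distr M borel V = nu"
    and "\<And>i. Vs i \<in> borel_measurable M" and "\<And>i. i \<ge> 1 \<Longrightarrow> distr M borel (Vs i) = nu"
    and "prob_space.indep_vars M (\<lambda>_. borel) Vs {1..}"
    and "t \<ge> 1" and "p \<in> {0..1}"
  shows "0 \<le> prob_space.expectation M (GFT Vs t (prob_space.expectation M V))
              - prob_space.expectation M (GFT Vs t p)
       \<and> prob_space.expectation M (GFT Vs t (prob_space.expectation M V))
              - prob_space.expectation M (GFT Vs t p)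
           \<le> Mb * \<bar>prob_space.expectation M V - p\<bar>^2
       \<and> prob_space.expectation M V \<in> {0..1}
       \<and> (\<forall>q\<in>{0..1}. prob_space.expectation M (GFT Vs t q)
              \<le> prob_space.expectation M (GFT Vs t (prob_space.expectation M V)))"
proof -
  interpret prob_space M by fact
  interpret nu: real_distribution nu
    using assms(8,9) by auto
  have integrable: "integrable nu (\<lambda>x. x)"
    and mean: "nu.expectation (\<lambda>x. x) \<in> {0..1}"
    using nu.integrable_ident_if_unit_interval nu.mean_in_unit_interval assms(7) by auto
  have atomless: "emeasure nu {q} = 0" for q
    unfolding assms(6) using assms(3) by (intro emeasure_density_lborel_singleton) simp
  have expectation_V: "expectation V = nu.expectation (\<lambda>x. x)"
    unfolding assms(9)[symmetric] using assms(8) by (simp add: integral_distr)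
  have expectation_GFT_nu: "expectation (GFT Vs t q) = expected_gft nu q" for q
    using expectation_GFT[OF assms(12,10,11) integrable assms(13)] .
  show ?thesis
    unfolding expectation_V expectation_GFT_nu power2_abs
    using nu.expected_gft_le_mean[OF integrable atomless]
      nu.expected_gft_mean_gap_le[OF assms(6,3,4,5) integrable] mean
    by auto
qed

end
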